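(* (i) Let $I=[-1,1]$ and let $(\mathcal X_j)_{j\ge1}$ be a sequence of $C^2$-functions $\mathcal X_j: I^2\to \mathbb R$ such that $\partial_x \mathcal X_j$ does not vanish. Let $(\mathcal B_j)_j$ be subsets of $I^2$ with $\mathrm{diam}\,\mathcal B_j\to0$ as $j\to\infty$, and $(x^0_j,y^0_j)\in\mathcal B_j$. Assume that the sequences $\|\partial_x \log|\partial_x \mathcal X_j| \|_{C^0}$ and $\|\partial_y \log|\partial_x \mathcal X_j| \|_{C^0}$ are bounded. Then the maps \[\Upsilon_j : (x,y) \in \mathcal B_j \mapsto \frac{\mathcal X_{j}(x,y)-\mathcal X_{j}(x^0_j,y)}{\partial_x \mathcal X_{j}(x^0_j,y^0_j)} + x^0_j \] are $C^1$-close to the first coordinate projection $(x,y)\mapsto x$ when $j$ is large, i.e. $\sup_{\mathcal B_j}\big(|\Upsilon_j(x,y)-x|+\|D\Upsilon_j(x,y)-(1,0)\|\big)\to 0$ as $j\to\infty$. (ii) Let $\rho>0$, $\tilde I=I+i[-\rho,\rho]$, and let $(\mathcal Z_j)_j$ be holomorphic functions $\mathcal Z_j:\tilde I^2\to\tilde I$ with $0<|\partial_z\mathcal Z_j|<1$. Let $\mathcal B_j\subset\tilde I^2$ and $(z_j,w_j)\in\mathcal B_j$ be such that $\mathrm{diam}\,\mathcal B_j/|\partial_z\mathcal Z_j(z_j,w_j)|\to0$ as $j\to\infty$ and the points $(z_j,w_j)$ stay at distance bounded below by a positive constant from $\partial\tilde I^2$. Then the maps \[ \tilde \Upsilon_j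 : (z,w) \in \mathcal B_j \mapsto \frac{\mathcal Z_{j}(z,w)-\mathcal Z_{j}(z_j,w)}{\partial_z \mathcal Z_{j}(z_j,w_j)} + z_j \] are $C^1$-close to the first coordinate projection $(z,w)\mapsto z$ when $j$ is large, in the same sense. *)

theory Defs
  imports "HOL-Analysis.Analysis"
begin

definition sqI :: "(real \<times> real) set" where
  "sqI = {-1..1} \<times> {-1..1}"

definition Itl :: "real \<Rightarrow> complex set" where
  "Itl \<rho> = {z. -1 \<le> Re z \<and> Re z \<le> 1 \<and> \<bar>Im z\<bar> \<le> \<rho>}"

definition C2_on :: "(real \<times> real \<Rightarrow> real) \<Rightarrow> (real \<times> real) set \<Rightarrow> bool" where
  "C2_on f S \<longleftrightarrow>
     (\<exists>U (f' :: real \<times> real \<Rightarrow> ((real \<times> real) \<Rightarrow>\<^sub>L real))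
        (f'' :: real \<times> real \<Rightarrow> ((real \<times> real) \<Rightarrow>\<^sub>L ((real \<times> real) \<Rightarrow>\<^sub>L real))).
        open U \<and> S \<subseteq> U \<and>
        (\<forall>p\<in>U. (f has_derivative blinfun_apply (f' p)) (at p)) \<and>
        (\<forall>p\<in>U. (f' has_derivative blinfun_apply (f'' p)) (at p)) \<and>
        continuous_on U f'')"

text \<open>Holomorphic function of two complex variables on an open set:
  complex (Frechet) differentiable at every point, i.e. the derivative is C-linear.\<close>
definition holomorphic2_on :: "(complex \<times> complex \<Rightarrow> complex) \<Rightarrow> (complex \<times> complex) set \<Rightarrow> bool" where
  "holomorphic2_on f U \<longleftrightarrow>
     (\<forall>p\<in>U. \<exists>a b. (f has_derivative (\<lambda>(u, v). a * u + b * v)) (at p))"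

definition pdx :: "('a::real_normed_field \<times> 'b \<Rightarrow> 'a) \<Rightarrow> 'a \<times> 'b \<Rightarrow> 'a" where
  "pdx f p = deriv (\<lambda>t. f (t, snd p)) (fst p)"

definition pdy :: "('a \<times> 'b::real_normed_field \<Rightarrow> 'b) \<Rightarrow> 'a \<times> 'b \<Rightarrow> 'b" where
  "pdy f p = deriv (\<lambda>t. f (fst p, t)) (snd p)"

definition C1_close_to_fst ::
  "(nat \<Rightarrow> 'a::real_normed_vector \<times> 'b::real_normed_vector \<Rightarrow> 'a) \<Rightarrow> (nat \<Rightarrow> ('a \<times> 'b) set) \<Rightarrow> bool" where
  "C1_close_to_fst Ups B \<longleftrightarrow>
     (\<forall>\<epsilon>>0. \<forall>\<^sub>F j in sequentially. \<forall>p\<in>B j.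
        Ups j differentiable (at p) \<and>
        norm (Ups j p - fst p) + onorm (\<lambda>v. frechet_derivative (Ups j) (at p) v - fst v) < \<epsilon>)"

end

theory Submission
  imports Defs "HOL-Complex_Analysis.Complex_Analysis"
begin

text \<open>With \<open>c = \<partial>\<^sub>xF(x0, y0)\<close> and \<open>\<Upsilon>(x, y) = (F(x, y) - F(x0, y)) / c + x0\<close>, the mean value
  theorem bounds \<open>|\<Upsilon>(x, y) - x|\<close> by \<open>|x - x0|\<close> times the oscillation of \<open>\<partial>\<^sub>xF / c\<close> on the
  segment from \<open>(x0, y)\<close> to \<open>(x, y)\<close>, while \<open>D\<Upsilon>(x, y) - (1, 0)\<close> is
  \<open>((\<partial>\<^sub>xF(x, y) - c) / c, (\<partial>\<^sub>yF(x, y) - \<partial>\<^sub>yF(x0, y)) / c)\<close>. So it suffices that the partial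
  derivatives are Lipschitz with a constant which, times the diameter, is small compared with \<open>|c|\<close>.
  In the real case the bound on the logarithmic derivative of \<open>\<partial>\<^sub>xX\<close> keeps \<open>|\<partial>\<^sub>xX|\<close> within
  a factor \<open>e\<^sup>4\<^sup>C\<close> of \<open>|c|\<close> on the whole square, so \<open>\<partial>\<^sub>xX\<close> is Lipschitz with constant
  \<open>O(|c|)\<close>. In the holomorphic case Cauchy estimates on a polydisc of fixed radius around
  \<open>(z\<^sub>j, w\<^sub>j)\<close> give a Lipschitz constant independent of \<open>j\<close>, and the errors are
  \<open>O(diam / |c|)\<close>.\<close>

definition has_derivative_partials_on ::
  "('a::real_normed_field \<times> 'a \<Rightarrow> 'a) \<Rightarrow> ('a \<times> 'a) set \<Rightarrow> bool" where
  "has_derivative_partials_on F S \<longleftrightarrow>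
     (\<forall>p\<in>S. (F has_derivative (\<lambda>(u, v). pdx F p * u + pdy F p * v)) (at p))"

text \<open>The map \<open>\<Upsilon>\<close> of the statement is \<open>renormalize F x0 c\<close> with \<open>c = pdx F (x0, y0)\<close>.\<close>

definition renormalize :: "('a::field \<times> 'b \<Rightarrow> 'a) \<Rightarrow> 'a \<Rightarrow> 'a \<Rightarrow> 'a \<times> 'b \<Rightarrow> 'a" where
  "renormalize F x0 c = (\<lambda>(x, y). (F (x, y) - F (x0, y)) / c + x0)"

lemma has_field_derivative_partials:
  fixes F :: "'a::real_normed_field \<times> 'a \<Rightarrow> 'a"
  assumes "(F has_derivative (\<lambda>(u, v). a * u + b * v)) (at (x, y))"
  shows "((\<lambda>t. F (t, y)) has_field_derivative a) (at x)"
    and "((\<lambda>t. F (x, t)) has_field_derivative b) (at y)"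
proof -
  have "((\<lambda>t. (t, y)) has_derivative (\<lambda>u. (u, 0))) (at x)"
    by (auto intro!: derivative_eq_intros)
  from diff_chain_at[OF this, of F "\<lambda>(u, v). a * u + b * v"] assms
  have "((\<lambda>t. F (t, y)) has_derivative (\<lambda>u. a * u)) (at x)"
    by (simp add: o_def)
  then show "((\<lambda>t. F (t, y)) has_field_derivative a) (at x)"
    by (simp add: has_field_derivative_def mult_commute_abs)
  have "((\<lambda>t. (x, t)) has_derivative (\<lambda>u. (0, u))) (at y)"
    by (auto intro!: derivative_eq_intros)
  from diff_chain_at[OF this, of F "\<lambda>(u, v). a * u + b * v"] assms
  have "((\<lambda>t. F (x, t)) has_derivative (\<lambda>u. b * u)) (at y)"
    by (simp add: o_def)
  then show "((\<lambda>t. F (x, t)) has_field_derivative b) (at y)"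
    by (simp add: has_field_derivative_def mult_commute_abs)
qed

lemma pdx_pdy_eq:
  fixes F :: "'a::real_normed_field \<times> 'a \<Rightarrow> 'a"
  assumes "(F has_derivative (\<lambda>(u, v). a * u + b * v)) (at p)"
  shows "pdx F p = a" and "pdy F p = b"
proof -
  obtain x y where p: "p = (x, y)" by fastforce
  show "pdx F p = a" "pdy F p = b"
    using has_field_derivative_partials[OF assms[unfolded p]]
    by (simp_all add: p pdx_def pdy_def DERIV_imp_deriv)
qed

lemma has_derivative_by_partials:
  fixes F :: "'a::real_normed_field \<times> 'a \<Rightarrow> 'a"
  assumes "(F has_derivative (\<lambda>(u, v). a * u + b * v)) (at p)"
  shows "(F has_derivative (\<lambda>(u, v). pdx F p * u + pdy F p * v)) (at p)"
  using assms by (simp add: pdx_pdy_eq[OF assms])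

lemma has_derivative_partials_onD:
  assumes "has_derivative_partials_on F S" and "(x, y) \<in> S"
  shows "((\<lambda>t. F (t, y)) has_field_derivative pdx F (x, y)) (at x within A)"
    and "((\<lambda>t. F (x, t)) has_field_derivative pdy F (x, y)) (at y within A)"
  using assms has_field_derivative_partials has_field_derivative_at_within
  unfolding has_derivative_partials_on_def by blast+

lemma real_linear_pair_eq:
  assumes "linear (L :: real \<times> real \<Rightarrow> real)"
  shows "L = (\<lambda>(u, v). L (1, 0) * u + L (0, 1) * v)"
proof
  fix p :: "real \<times> real"
  obtain u v where p: "p = (u, v)" by fastforce
  have "L (u, v) = L (u *\<^sub>R (1, 0) + v *\<^sub>R (0, 1))" by simp
  also have "\<dots> = u * L (1, 0) + v * L (0, 1)"
    by (simp only: linear_add[OF assms] linear_scale[OF assms] real_scaleR_def)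
  finally show "L p = (\<lambda>(u, v). L (1, 0) * u + L (0, 1) * v) p"
    by (simp add: p mult.commute)
qed

lemma real_partials_of_derivative:
  fixes F :: "real \<times> real \<Rightarrow> real"
  assumes "(F has_derivative F') (at p)"
  shows "pdx F p = F' (1, 0)"
    and "(F has_derivative (\<lambda>(u, v). pdx F p * u + pdy F p * v)) (at p)"
proof -
  have F': "(F has_derivative (\<lambda>(u, v). F' (1, 0) * u + F' (0, 1) * v)) (at p)"
    using assms real_linear_pair_eq[OF has_derivative_linear[OF assms]] by simp
  show "pdx F p = F' (1, 0)"
    using pdx_pdy_eq(1)[OF F'] .
  show "(F has_derivative (\<lambda>(u, v). pdx F p * u + pdy F p * v)) (at p)"
    using has_derivative_by_partials[OF F'] .
qed

lemma C2_on_partials: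
  assumes "C2_on f S"
  shows "has_derivative_partials_on f S" and "has_derivative_partials_on (pdx f) S"
proof -
  obtain U f' f'' where U: "open U" "S \<subseteq> U"
    and d1: "\<forall>p\<in>U. (f has_derivative blinfun_apply (f' p)) (at p)"
    and d2: "\<forall>p\<in>U. (f' has_derivative blinfun_apply (f'' p)) (at p)"
    using assms unfolding C2_on_def by blast
  show "has_derivative_partials_on f S"
    using d1 U(2) real_partials_of_derivative(2) unfolding has_derivative_partials_on_def by blast
  have "(pdx f has_derivative (\<lambda>h. f'' p h (1, 0))) (at p)" if "p \<in> U" for p
  proof -
    have "((\<lambda>q. f' q (1, 0)) has_derivative (\<lambda>h. f'' p h (1, 0))) (at p)"
      using bounded_linear.has_derivative[OF blinfun.bounded_linear_left, of f' "f'' p" "at p" "(1, 0)"]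
        d2 that by auto
    then show ?thesis
      by (rule has_derivative_transform_within_open[OF _ U(1) that])
         (use d1 real_partials_of_derivative(1) in metis)
  qed
  then show "has_derivative_partials_on (pdx f) S"
    using U(2) real_partials_of_derivative(2) unfolding has_derivative_partials_on_def by blast
qed

lemma holomorphic2_on_partials:
  "holomorphic2_on F U \<Longrightarrow> has_derivative_partials_on F U"
  unfolding holomorphic2_on_def has_derivative_partials_on_def
  using has_derivative_by_partials by blast

lemma increment_bound_by_partials:
  fixes h :: "'a::real_normed_field \<times> 'a \<Rightarrow> 'a"
  assumes "convex A" "convex B" and p: "p \<in> A \<times> B" and q: "q \<in> A \<times> B"
    and hx: "\<And>s t. (s, t) \<in> A \<times> B \<Longrightarrow>
               ((\<lambda>u. h (u, t)) has_field_derivative hx (s, t)) (at s within A) \<and> norm (hx (s, t)) \<le> M"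
    and hy: "\<And>s t. (s, t) \<in> A \<times> B \<Longrightarrow>
               ((\<lambda>u. h (s, u)) has_field_derivative hy (s, t)) (at t within B) \<and> norm (hy (s, t)) \<le> M"
  shows "norm (h p - h q) \<le> M * (norm (fst p - fst q) + norm (snd p - snd q))"
proof -
  obtain x y x' y' where pq: "p = (x, y)" "q = (x', y')" by fastforce
  have "norm (h (x, y) - h (x', y)) \<le> M * norm (x - x')"
    by (rule field_differentiable_bound[OF \<open>convex A\<close>, of "\<lambda>u. h (u, y)" "\<lambda>s. hx (s, y)"])
       (use hx p q pq in auto)
  moreover have "norm (h (x', y) - h (x', y')) \<le> M * norm (y - y')"
    by (rule field_differentiable_bound[OF \<open>convex B\<close>, of "\<lambda>u. h (x', u)" "\<lambda>t. hy (x', t)"])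
       (use hy p q pq in auto)
  ultimately show ?thesis
    using norm_triangle_ineq[of "h (x, y) - h (x', y)" "h (x', y) - h (x', y')"]
    by (simp add: pq distrib_left)
qed

lemma derivative_le_Lipschitz_constant:
  fixes f :: "'a::real_normed_field \<Rightarrow> 'a"
  assumes "(f has_field_derivative D) (at y within S)" and "at y within S \<noteq> bot"
    and "\<And>z. z \<in> S \<Longrightarrow> norm (f z - f y) \<le> L * norm (z - y)"
  shows "norm D \<le> L"
proof (rule Lim_norm_ubound[OF assms(2)])
  show "((\<lambda>z. (f z - f y) / (z - y)) \<longlongrightarrow> D) (at y within S)"
    using assms(1) by (simp add: has_field_derivative_iff)
  show "\<forall>\<^sub>F z in at y within S. norm ((f z - f y) / (z - y)) \<le> L"
    unfolding eventually_at_filter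
    using assms(3) by (auto simp: norm_divide divide_le_eq)
qed

lemma onorm_linear_pair_minus_fst:
  fixes a b c :: "'a::real_normed_field"
  assumes "c \<noteq> 0"
  shows "onorm (\<lambda>v. (a * fst v + b * snd v) / c - fst v) \<le> (norm (a - c) + norm b) / norm c"
proof (rule onorm_bound)
  fix v :: "'a \<times> 'a"
  have fst_snd: "norm (fst v) \<le> norm v" "norm (snd v) \<le> norm v"
    using norm_fst_le[of "fst v" "snd v"] norm_snd_le[of "snd v" "fst v"] by simp_all
  have "norm ((a - c) * fst v + b * snd v) \<le> norm (a - c) * norm (fst v) + norm b * norm (snd v)"
    by (metis norm_mult norm_triangle_ineq)
  also have "\<dots> \<le> (norm (a - c) + norm b) * norm v"
    using fst_snd by (simp add: distrib_right add_mono mult_left_mono)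
  finally have "norm ((a - c) * fst v + b * snd v) / norm c \<le> (norm (a - c) + norm b) / norm c * norm v"
    by (simp add: divide_right_mono)
  moreover have "(a * fst v + b * snd v) / c - fst v = ((a - c) * fst v + b * snd v) / c"
    using assms by (simp add: field_simps)
  ultimately show "norm ((a * fst v + b * snd v) / c - fst v) \<le> (norm (a - c) + norm b) / norm c * norm v"
    by (simp add: norm_divide)
qed simp

lemma renormalize_eq: "renormalize F x0 c = (\<lambda>q. (F q - F (x0, snd q)) / c + x0)"
  by (simp add: renormalize_def case_prod_unfold)

lemma renormalize_has_derivative:
  fixes F :: "'a::real_normed_field \<times> 'a \<Rightarrow> 'a"
  assumes "has_derivative_partials_on F {(x, y), (x0, y)}"
  shows "(renormalize F x0 c has_derivative
           (\<lambda>v. (pdx F (x, y) * fst v + (pdy F (x, y) - pdy F (x0, y)) * snd v) / c)) (at (x, y))"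
proof -
  have "((\<lambda>q. (x0, snd q)) has_derivative (\<lambda>v. (0, snd v))) (at (x, y))"
    by (auto intro!: derivative_eq_intros)
  from diff_chain_at[OF this, of F "\<lambda>(u, v). pdx F (x0, y) * u + pdy F (x0, y) * v"] assms
  have "((\<lambda>q. F (x0, snd q)) has_derivative (\<lambda>v. pdy F (x0, y) * snd v)) (at (x, y))"
    by (simp add: o_def has_derivative_partials_on_def)
  with assms have "((\<lambda>q. F q - F (x0, snd q)) has_derivative
      (\<lambda>v. pdx F (x, y) * fst v + (pdy F (x, y) - pdy F (x0, y)) * snd v)) (at (x, y))"
    by (auto intro!: has_derivative_diff simp: case_prod_unfold algebra_simps has_derivative_partials_on_def)
  from bounded_linear.has_derivative[OF bounded_linear_divide[of c] this]
  show ?thesis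
    unfolding renormalize_eq by (rule has_derivative_add_const)
qed

lemma renormalize_value_bound:
  fixes F :: "'a::real_normed_field \<times> 'a \<Rightarrow> 'a"
  assumes c: "c \<noteq> 0"
    and partials: "has_derivative_partials_on F (closed_segment x0 x \<times> {y})"
    and pdx_close: "\<And>t. t \<in> closed_segment x0 x \<Longrightarrow> norm (pdx F (t, y) - c) \<le> A"
  shows "norm (renormalize F x0 c (x, y) - x) \<le> A * norm (x - x0) / norm c"
proof -
  have "norm ((F (x, y) - c * x) - (F (x0, y) - c * x0)) \<le> A * norm (x - x0)"
  proof (rule field_differentiable_bound[OF convex_closed_segment,
        of x0 x "\<lambda>t. F (t, y) - c * t" "\<lambda>t. pdx F (t, y) - c"])
    fix t assume t: "t \<in> closed_segment x0 x"
    have "((\<lambda>t. F (t, y)) has_field_derivative pdx F (t, y)) (at t within closed_segment x0 x)"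
      using has_derivative_partials_onD(1)[OF partials, of t y] t by simp
    then show "((\<lambda>t. F (t, y) - c * t) has_field_derivative pdx F (t, y) - c)
                 (at t within closed_segment x0 x)"
      by (auto intro!: derivative_eq_intros)
    show "norm (pdx F (t, y) - c) \<le> A" using pdx_close[OF t] .
  qed auto
  moreover have "renormalize F x0 c (x, y) - x = ((F (x, y) - c * x) - (F (x0, y) - c * x0)) / c"
    using c by (simp add: renormalize_def field_simps)
  ultimately show ?thesis
    by (simp add: norm_divide divide_right_mono)
qed

lemma renormalize_C1_estimate:
  fixes F :: "'a::real_normed_field \<times> 'a \<Rightarrow> 'a"
  assumes c: "c \<noteq> 0"
    and partials: "has_derivative_partials_on F (closed_segment x0 x \<times> {y})"
    and pdx_close: "\<And>t. t \<in> closed_segment x0 x \<Longrightarrow> norm (pdx F (t, y) - c) \<le> A"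
    and pdy_close: "norm (pdy F (x, y) - pdy F (x0, y)) \<le> A'"
  shows "\<exists>D. (renormalize F x0 c has_derivative D) (at (x, y)) \<and>
           norm (renormalize F x0 c (x, y) - x) + onorm (\<lambda>v. D v - fst v)
             \<le> (A * norm (x - x0) + A + A') / norm c"
proof -
  have "has_derivative_partials_on F {(x, y), (x0, y)}"
    using partials unfolding has_derivative_partials_on_def by auto
  note derivative = renormalize_has_derivative[OF this, of c]
  have "onorm (\<lambda>v. (pdx F (x, y) * fst v + (pdy F (x, y) - pdy F (x0, y)) * snd v) / c - fst v)
          \<le> (A + A') / norm c"
    using onorm_linear_pair_minus_fst[OF c, of "pdx F (x, y)" "pdy F (x, y) - pdy F (x0, y)"]
      divide_right_mono[OF add_mono[OF pdx_close[OF ends_in_segment(2)] pdy_close], of "norm c"]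
    by (rule order_trans) simp
  with renormalize_value_bound[OF c partials pdx_close] derivative show ?thesis
    by (intro exI) (auto simp: add_divide_distrib)
qed

lemma C1_close_to_fstI:
  assumes e: "e \<longlonglongrightarrow> 0"
    and estimate: "\<forall>\<^sub>F j in sequentially. \<forall>p\<in>B j. \<exists>D. (Ups j has_derivative D) (at p) \<and>
                      norm (Ups j p - fst p) + onorm (\<lambda>v. D v - fst v) \<le> e j"
  shows "C1_close_to_fst Ups B"
  unfolding C1_close_to_fst_def
proof (intro allI impI)
  fix \<epsilon> :: real assume "0 < \<epsilon>"
  from estimate order_tendstoD(2)[OF e \<open>0 < \<epsilon>\<close>]
  show "\<forall>\<^sub>F j in sequentially. \<forall>p\<in>B j. Ups j differentiable (at p) \<and>
          norm (Ups j p - fst p) + onorm (\<lambda>v. frechet_derivative (Ups j) (at p) v - fst v) < \<epsilon>"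
  proof eventually_elim
    case (elim j)
    show ?case
    proof
      fix p assume "p \<in> B j"
      with elim(1) obtain D where D: "(Ups j has_derivative D) (at p)"
        and le: "norm (Ups j p - fst p) + onorm (\<lambda>v. D v - fst v) \<le> e j" by blast
      have "frechet_derivative (Ups j) (at p) = D" using frechet_derivative_at[OF D] by simp
      with D le elim(2) show "Ups j differentiable (at p) \<and>
          norm (Ups j p - fst p) + onorm (\<lambda>v. frechet_derivative (Ups j) (at p) v - fst v) < \<epsilon>"
        by (auto simp: differentiable_def)
    qed
  qed
qed

lemma has_real_derivative_ln_abs:
  assumes "(g has_real_derivative D) (at a)" and "g a \<noteq> 0"
  shows "((\<lambda>t. ln \<bar>g t\<bar>) has_real_derivative D / g a) (at a)"
proof -
  have ln_abs: "(\<lambda>t. ln \<bar>g t\<bar>) = (\<lambda>t. ln ((g t)\<^sup>2) / 2)"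
  proof
    fix t
    show "ln \<bar>g t\<bar> = ln ((g t)\<^sup>2) / 2"
      using ln_realpow[of "\<bar>g t\<bar>" 2] by (cases "g t = 0") simp_all
  qed
  have "0 < g a * g a" using assms(2) not_real_square_gt_zero by blast
  then have "((\<lambda>t. ln ((g t)\<^sup>2) / 2) has_real_derivative D / g a) (at a)"
    using assms by (auto intro!: derivative_eq_intros simp: power2_eq_square)
  then show ?thesis unfolding ln_abs .
qed

lemma partials_ln_abs:
  fixes g :: "real \<times> real \<Rightarrow> real"
  assumes "(g has_derivative (\<lambda>(u, v). pdx g p * u + pdy g p * v)) (at p)" and "g p \<noteq> 0"
  shows "pdx (\<lambda>q. ln \<bar>g q\<bar>) p = pdx g p / g p"
    and "pdy (\<lambda>q. ln \<bar>g q\<bar>) p = pdy g p / g p"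
proof -
  obtain x y where p: "p = (x, y)" by fastforce
  note d = has_field_derivative_partials[OF assms(1)[unfolded p]]
  show "pdx (\<lambda>q. ln \<bar>g q\<bar>) p = pdx g p / g p" "pdy (\<lambda>q. ln \<bar>g q\<bar>) p = pdy g p / g p"
    using has_real_derivative_ln_abs[OF d(1)] has_real_derivative_ln_abs[OF d(2)] assms(2)
    by (simp_all add: p pdx_def pdy_def DERIV_imp_deriv)
qed

locale log_derivative_bounded =
  fixes X :: "real \<times> real \<Rightarrow> real" and C :: real
  assumes C2: "C2_on X sqI"
    and pdx_nonzero: "\<And>p. p \<in> sqI \<Longrightarrow> pdx X p \<noteq> 0"
    and log_bound: "\<And>p. p \<in> sqI \<Longrightarrow>
                     \<bar>pdx (\<lambda>q. ln \<bar>pdx X q\<bar>) p\<bar> \<le> C \<and> \<bar>pdy (\<lambda>q. ln \<bar>pdx X q\<bar>) p\<bar> \<le> C"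
begin

lemma C_nonneg: "0 \<le> C"
  using log_bound[of "(0, 0)"] abs_ge_zero order_trans by (fastforce simp: sqI_def)

lemma second_partials_bound:
  assumes "p \<in> sqI"
  shows "\<bar>pdx (pdx X) p\<bar> \<le> C * \<bar>pdx X p\<bar>" and "\<bar>pdy (pdx X) p\<bar> \<le> C * \<bar>pdx X p\<bar>"
proof -
  have "(pdx X has_derivative (\<lambda>(u, v). pdx (pdx X) p * u + pdy (pdx X) p * v)) (at p)"
    using C2_on_partials(2)[OF C2] assms unfolding has_derivative_partials_on_def by blast
  note ln_partials = partials_ln_abs[OF this pdx_nonzero[OF assms]]
  have "0 < \<bar>pdx X p\<bar>" using pdx_nonzero[OF assms] by simp
  then show "\<bar>pdx (pdx X) p\<bar> \<le> C * \<bar>pdx X p\<bar>" "\<bar>pdy (pdx X) p\<bar> \<le> C * \<bar>pdx X p\<bar>"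
    using log_bound[OF assms] unfolding ln_partials by (simp_all add: abs_divide divide_le_eq)
qed

lemma pdx_growth:
  assumes "p \<in> sqI" and "q \<in> sqI"
  shows "\<bar>pdx X p\<bar> \<le> \<bar>pdx X q\<bar> * exp (4 * C)"
proof -
  have increment: "abs (ln \<bar>pdx X p\<bar> - ln \<bar>pdx X q\<bar>) \<le> C * (\<bar>fst p - fst q\<bar> + \<bar>snd p - snd q\<bar>)"
  proof (rule increment_bound_by_partials[where h = "\<lambda>q. ln \<bar>pdx X q\<bar>" and A = "{-1..1}" and B = "{-1..1}"
        and hx = "\<lambda>q. pdx (pdx X) q / pdx X q" and hy = "\<lambda>q. pdy (pdx X) q / pdx X q",
        simplified real_norm_def])
    fix s t assume st: "(s, t) \<in> {-1..1::real} \<times> {-1..1::real}"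
    then have st': "(s, t) \<in> sqI" by (simp add: sqI_def)
    note d = has_derivative_partials_onD[OF C2_on_partials(2)[OF C2] st']
    show "((\<lambda>u. ln \<bar>pdx X (u, t)\<bar>) has_real_derivative pdx (pdx X) (s, t) / pdx X (s, t))
            (at s within {-1..1}) \<and> \<bar>pdx (pdx X) (s, t) / pdx X (s, t)\<bar> \<le> C"
      using has_real_derivative_ln_abs[OF d(1)[where A = UNIV] pdx_nonzero[OF st']]
        second_partials_bound(1)[OF st'] pdx_nonzero[OF st']
      by (auto intro: has_field_derivative_at_within simp: abs_divide divide_le_eq)
    show "((\<lambda>u. ln \<bar>pdx X (s, u)\<bar>) has_real_derivative pdy (pdx X) (s, t) / pdx X (s, t))
            (at t within {-1..1}) \<and> \<bar>pdy (pdx X) (s, t) / pdx X (s, t)\<bar> \<le> C"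
      using has_real_derivative_ln_abs[OF d(2)[where A = UNIV] pdx_nonzero[OF st']]
        second_partials_bound(2)[OF st'] pdx_nonzero[OF st']
      by (auto intro: has_field_derivative_at_within simp: abs_divide divide_le_eq)
  qed (use assms in \<open>auto simp: sqI_def\<close>)
  have "\<bar>fst p - fst q\<bar> + \<bar>snd p - snd q\<bar> \<le> 4"
    using assms by (auto simp: sqI_def)
  from mult_left_mono[OF this C_nonneg] increment[unfolded abs_le_iff]
  have "ln \<bar>pdx X p\<bar> \<le> ln \<bar>pdx X q\<bar> + 4 * C" by linarith
  then have "exp (ln \<bar>pdx X p\<bar>) \<le> exp (ln \<bar>pdx X q\<bar> + 4 * C)" by simp
  then show ?thesis
    using pdx_nonzero[OF assms(1)] pdx_nonzero[OF assms(2)] by (simp add: exp_add)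
qed

lemma pdx_Lipschitz:
  assumes "p \<in> sqI" and "p' \<in> sqI" and "q \<in> sqI"
  shows "\<bar>pdx X p - pdx X p'\<bar> \<le> C * exp (4 * C) * \<bar>pdx X q\<bar> * (\<bar>fst p - fst p'\<bar> + \<bar>snd p - snd p'\<bar>)"
proof (rule increment_bound_by_partials[where A = "{-1..1}" and B = "{-1..1}"
      and hx = "pdx (pdx X)" and hy = "pdy (pdx X)", simplified real_norm_def])
  fix s t assume st: "(s, t) \<in> {-1..1::real} \<times> {-1..1::real}"
  then have st': "(s, t) \<in> sqI" by (simp add: sqI_def)
  have "C * \<bar>pdx X (s, t)\<bar> \<le> C * exp (4 * C) * \<bar>pdx X q\<bar>"
    using mult_left_mono[OF pdx_growth[OF st' assms(3)] C_nonneg] by (simp add: ac_simps)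
  moreover note has_derivative_partials_onD[OF C2_on_partials(2)[OF C2] st']
  ultimately show "((\<lambda>u. pdx X (u, t)) has_real_derivative pdx (pdx X) (s, t)) (at s within {-1..1}) \<and>
      \<bar>pdx (pdx X) (s, t)\<bar> \<le> C * exp (4 * C) * \<bar>pdx X q\<bar>"
    and "((\<lambda>u. pdx X (s, u)) has_real_derivative pdy (pdx X) (s, t)) (at t within {-1..1}) \<and>
      \<bar>pdy (pdx X) (s, t)\<bar> \<le> C * exp (4 * C) * \<bar>pdx X q\<bar>"
    using second_partials_bound[OF st'] by auto
qed (use assms in \<open>auto simp: sqI_def\<close>)

text \<open>The mixed difference is controlled without exchanging the order of differentiation:
  \<open>pdy X (x, y) - pdy X (x0, y)\<close> is the derivative at \<open>y\<close> of \<open>s \<mapsto> X (x, s) - X (x0, s)\<close>,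
  whose Lipschitz constant is bounded by the mean value theorem in the first variable.\<close>

lemma pdy_difference_bound:
  assumes "x \<in> {-1..1}" and "x0 \<in> {-1..1}" and "y \<in> {-1..1}" and "q \<in> sqI"
  shows "\<bar>pdy X (x, y) - pdy X (x0, y)\<bar> \<le> C * exp (4 * C) * \<bar>pdx X q\<bar> * \<bar>x - x0\<bar>"
proof (rule derivative_le_Lipschitz_constant[where S = "{-1..1::real}", simplified real_norm_def])
  note partials = has_derivative_partials_onD[OF C2_on_partials(1)[OF C2]]
  let ?M = "C * exp (4 * C) * \<bar>pdx X q\<bar>"
  show "((\<lambda>s. X (x, s) - X (x0, s)) has_real_derivative pdy X (x, y) - pdy X (x0, y)) (at y within {-1..1})"
    using partials(2)[of x y] partials(2)[of x0 y] assms by (auto intro!: derivative_eq_intros simp: sqI_def)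
  show "at y within {-1..1::real} \<noteq> bot"
    using assms(3) by (simp add: trivial_limit_within islimpt_Icc)
  fix z :: real assume z: "z \<in> {-1..1}"
  have "\<bar>(X (x, z) - X (x, y)) - (X (x0, z) - X (x0, y))\<bar> \<le> ?M * \<bar>z - y\<bar> * \<bar>x - x0\<bar>"
  proof (rule field_differentiable_bound[OF convex_real_interval(5)[of "-1" 1],
        of "\<lambda>t. X (t, z) - X (t, y)" "\<lambda>t. pdx X (t, z) - pdx X (t, y)", simplified real_norm_def])
    fix t :: real assume t: "t \<in> {-1..1}"
    show "((\<lambda>t. X (t, z) - X (t, y)) has_real_derivative pdx X (t, z) - pdx X (t, y)) (at t within {-1..1})"
      using partials(1)[of t z] partials(1)[of t y] t z assms by (auto intro!: derivative_eq_intros simp: sqI_def)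
    show "\<bar>pdx X (t, z) - pdx X (t, y)\<bar> \<le> ?M * \<bar>z - y\<bar>"
      using pdx_Lipschitz[of "(t, z)" "(t, y)" q] t z assms by (simp add: sqI_def)
  qed (use assms in auto)
  then show "\<bar>X (x, z) - X (x0, z) - (X (x, y) - X (x0, y))\<bar> \<le> ?M * \<bar>x - x0\<bar> * \<bar>z - y\<bar>"
    by (simp add: algebra_simps)
qed

lemma renormalize_estimate:
  assumes p0: "(x0, y0) \<in> sqI" and p: "(x, y) \<in> sqI"
  defines "d \<equiv> dist (x, y) (x0, y0)"
  shows "\<exists>D. (renormalize X x0 (pdx X (x0, y0)) has_derivative D) (at (x, y)) \<and>
           norm (renormalize X x0 (pdx X (x0, y0)) (x, y) - x) + onorm (\<lambda>v. D v - fst v)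
             \<le> C * exp (4 * C) * (2 * d\<^sup>2 + 3 * d)"
proof -
  define c where "c = pdx X (x0, y0)"
  define M where "M = C * exp (4 * C) * \<bar>c\<bar>"
  have c: "c \<noteq> 0" using pdx_nonzero[OF p0] by (simp add: c_def)
  have M: "0 \<le> M" using C_nonneg by (simp add: M_def)
  have dx: "\<bar>x - x0\<bar> \<le> d" and dy: "\<bar>y - y0\<bar> \<le> d"
    using dist_fst_le[of "(x, y)" "(x0, y0)"] dist_snd_le[of "(x, y)" "(x0, y0)"]
    by (simp_all add: d_def dist_real_def)
  have I: "x \<in> {-1..1}" "x0 \<in> {-1..1}" "y \<in> {-1..1}" "y0 \<in> {-1..1}"
    using p p0 by (auto simp: sqI_def)
  have segment: "closed_segment x0 x \<subseteq> {-1..1}"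
    using I by (intro closed_segment_subset) auto
  obtain D where derivative: "(renormalize X x0 c has_derivative D) (at (x, y))"
    and estimate: "norm (renormalize X x0 c (x, y) - x) + onorm (\<lambda>v. D v - fst v)
           \<le> ((2 * M * d) * norm (x - x0) + 2 * M * d + M * d) / norm c"
  proof (rule exE[OF renormalize_C1_estimate[OF c]])
    show "has_derivative_partials_on X (closed_segment x0 x \<times> {y})"
      using C2_on_partials(1)[OF C2] segment I unfolding has_derivative_partials_on_def sqI_def by blast
    show "norm (pdx X (t, y) - c) \<le> 2 * M * d" if t: "t \<in> closed_segment x0 x" for t
    proof -
      have "\<bar>t - x0\<bar> \<le> d" using segment_bound1[OF t] dx by simp
      then have "\<bar>t - x0\<bar> + \<bar>y - y0\<bar> \<le> 2 * d" using dy by linarith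
      from mult_left_mono[OF this M] have "M * (\<bar>t - x0\<bar> + \<bar>y - y0\<bar>) \<le> 2 * M * d"
        by simp
      with pdx_Lipschitz[of "(t, y)" "(x0, y0)" "(x0, y0)"] segment t I p0 show ?thesis
        by (auto simp: c_def M_def sqI_def)
    qed
    show "norm (pdy X (x, y) - pdy X (x0, y)) \<le> M * d"
      using pdy_difference_bound[OF I(1,2,3) p0] mult_left_mono[OF dx M] by (simp add: M_def c_def)
  qed blast+
  have "((2 * M * d) * norm (x - x0) + 2 * M * d + M * d) / norm c
          \<le> C * exp (4 * C) * (2 * d\<^sup>2 + 3 * d)"
  proof -
    have "(2 * M * d) * \<bar>x - x0\<bar> \<le> (2 * M * d) * d"
      using dx M by (intro mult_left_mono) (auto simp: d_def)
    then show ?thesis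
      using c by (simp add: M_def divide_le_eq power2_eq_square algebra_simps)
  qed
  with derivative estimate show ?thesis unfolding c_def by (blast intro: order_trans)
qed

end

lemma Cauchy_deriv_bound:
  fixes f :: "complex \<Rightarrow> complex"
  assumes "0 < r"
    and holo: "\<And>z. z \<in> cball \<xi> r \<Longrightarrow> f field_differentiable at z"
    and bound: "\<And>z. z \<in> cball \<xi> r \<Longrightarrow> norm (f z) \<le> B"
  shows "norm (deriv f \<xi>) \<le> B / r"
proof -
  have "norm ((deriv ^^ 1) f \<xi>) \<le> fact 1 * B / r ^ 1"
  proof (rule Cauchy_inequality[OF _ _ \<open>0 < r\<close>])
    show "f holomorphic_on ball \<xi> r"
      using holo by (simp add: holomorphic_on_def field_differentiable_at_within)
    show "continuous_on (cball \<xi> r) f"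
      using holo by (intro continuous_at_imp_continuous_on ballI field_differentiable_imp_continuous_at)
    show "norm (f z) \<le> B" if "norm (\<xi> - z) = r" for z
      using bound that by (simp add: dist_norm)
  qed
  then show ?thesis by simp
qed

locale bounded_polydisc =
  fixes F :: "complex \<times> complex \<Rightarrow> complex" and a b :: complex and R K :: real
  assumes R_pos: "0 < R"
    and partials: "has_derivative_partials_on F (cball a R \<times> cball b R)"
    and bounded: "\<And>z w. z \<in> cball a R \<Longrightarrow> w \<in> cball b R \<Longrightarrow> norm (F (z, w)) \<le> K"
begin

lemma K_nonneg: "0 \<le> K"
proof -
  have "norm (F (a, b)) \<le> K" using bounded R_pos by simp
  then show ?thesis using norm_ge_zero order_trans by blast
qed

lemma field_differentiable_partials:
  assumes "z \<in> cball a R" and "w \<in> cball b R"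
  shows "(\<lambda>s. F (s, w)) field_differentiable at z" and "(\<lambda>s. F (z, s)) field_differentiable at w"
  using has_derivative_partials_onD[OF partials, of z w UNIV] assms
  by (auto simp: field_differentiable_def)

lemma cball_half_subset:
  assumes "s \<in> cball c (R / 2)"
  shows "cball s (R / 2) \<subseteq> cball c R"
proof
  fix x assume "x \<in> cball s (R / 2)"
  then show "x \<in> cball c R" using assms dist_triangle[of c x s] by simp
qed

lemma partials_bound:
  assumes "z \<in> cball a (R / 2)" and "w \<in> cball b (R / 2)"
  shows "norm (pdx F (z, w)) \<le> 2 * K / R" and "norm (pdy F (z, w)) \<le> 2 * K / R"
proof -
  have z: "cball z (R / 2) \<subseteq> cball a R" "z \<in> cball a R"
    and w: "cball w (R / 2) \<subseteq> cball b R" "w \<in> cball b R"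
    using assms cball_half_subset R_pos by auto
  have "norm (deriv (\<lambda>s. F (s, w)) z) \<le> K / (R / 2)"
  proof (rule Cauchy_deriv_bound)
    fix s assume "s \<in> cball z (R / 2)"
    with z(1) have "s \<in> cball a R" by blast
    then show "(\<lambda>s. F (s, w)) field_differentiable at s" "norm (F (s, w)) \<le> K"
      using field_differentiable_partials(1) bounded w(2) by auto
  qed (use R_pos in simp)
  moreover have "norm (deriv (\<lambda>s. F (z, s)) w) \<le> K / (R / 2)"
  proof (rule Cauchy_deriv_bound)
    fix s assume "s \<in> cball w (R / 2)"
    with w(1) have "s \<in> cball b R" by blast
    then show "(\<lambda>s. F (z, s)) field_differentiable at s" "norm (F (z, s)) \<le> K"
      using field_differentiable_partials(2) bounded z(2) by auto
  qed (use R_pos in simp)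
  ultimately show "norm (pdx F (z, w)) \<le> 2 * K / R" and "norm (pdy F (z, w)) \<le> 2 * K / R"
    by (simp_all add: pdx_def pdy_def mult.commute)
qed

lemma Lipschitz_half_polydisc:
  assumes "p \<in> cball a (R / 2) \<times> cball b (R / 2)" and "q \<in> cball a (R / 2) \<times> cball b (R / 2)"
  shows "norm (F p - F q) \<le> 2 * K / R * (norm (fst p - fst q) + norm (snd p - snd q))"
proof (rule increment_bound_by_partials[OF convex_cball convex_cball assms, where hx = "pdx F" and hy = "pdy F"])
  fix s t assume st: "(s, t) \<in> cball a (R / 2) \<times> cball b (R / 2)"
  then have "(s, t) \<in> cball a R \<times> cball b R" using R_pos by auto
  with st show "((\<lambda>u. F (u, t)) has_field_derivative pdx F (s, t)) (at s within cball a (R / 2)) \<and>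
      norm (pdx F (s, t)) \<le> 2 * K / R"
    and "((\<lambda>u. F (s, u)) has_field_derivative pdy F (s, t)) (at t within cball b (R / 2)) \<and>
      norm (pdy F (s, t)) \<le> 2 * K / R"
    using has_derivative_partials_onD[OF partials] partials_bound by auto
qed

text \<open>Both estimates below are Cauchy estimates for the derivative of a difference of two
  slices of \<open>F\<close>; the difference is small by the Lipschitz bound. For \<open>pdx\<close> the first slice
  is translated so that both derivatives are taken at \<open>a\<close>.\<close>

lemma pdx_near_centre:
  assumes t: "norm (t - a) \<le> R / 4" and w: "norm (w - b) \<le> R / 4"
  shows "norm (pdx F (t, w) - pdx F (a, b)) \<le> 8 * K / R\<^sup>2 * (norm (t - a) + norm (w - b))"
proof -
  define f where "f u = F (u + (t - a), w) - F (u, b)" for u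
  have shifted: "u + (t - a) \<in> cball a (R / 2)" "u \<in> cball a (R / 2)" if "u \<in> cball a (R / 4)" for u
  proof -
    have "norm (u - a) \<le> R / 4" using that by (simp add: dist_norm norm_minus_commute)
    then show "u + (t - a) \<in> cball a (R / 2)"
      using t norm_triangle_ineq[of "u - a" "t - a"]
      by (auto simp: dist_norm norm_minus_commute algebra_simps)
    show "u \<in> cball a (R / 2)" using that R_pos by simp
  qed
  have wb: "w \<in> cball b (R / 2)" "b \<in> cball b (R / 2)"
    using w R_pos by (auto simp: dist_norm norm_minus_commute)
  have f_deriv: "(f has_field_derivative pdx F (u + (t - a), w) - pdx F (u, b)) (at u)"
    if "u \<in> cball a (R / 4)" for u
  proof -
    have "(u + (t - a), w) \<in> cball a R \<times> cball b R" "(u, b) \<in> cball a R \<times> cball b R"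
      using shifted[OF that] wb R_pos by auto
    then have "((\<lambda>s. F (s, w)) has_field_derivative pdx F (u + (t - a), w)) (at (u + (t - a)))"
      and "((\<lambda>s. F (s, b)) has_field_derivative pdx F (u, b)) (at u)"
      using has_derivative_partials_onD(1)[OF partials, where A = UNIV] by auto
    then show ?thesis
      unfolding f_def by (auto intro!: derivative_eq_intros DERIV_chain2[where g = "\<lambda>u. u + (t - a)"])
  qed
  have "pdx F (t, w) - pdx F (a, b) = deriv f a"
    using f_deriv[of a] R_pos by (simp add: DERIV_imp_deriv)
  also have "norm \<dots> \<le> 2 * K / R * (norm (t - a) + norm (w - b)) / (R / 4)"
  proof (rule Cauchy_deriv_bound)
    fix u assume u: "u \<in> cball a (R / 4)"
    show "f field_differentiable at u"
      using f_deriv[OF u] by (auto simp: field_differentiable_def)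
    show "norm (f u) \<le> 2 * K / R * (norm (t - a) + norm (w - b))"
      using Lipschitz_half_polydisc[of "(u + (t - a), w)" "(u, b)"] shifted[OF u] wb by (simp add: f_def)
  qed (use R_pos in simp)
  also have "\<dots> = 8 * K / R\<^sup>2 * (norm (t - a) + norm (w - b))"
    using R_pos by (simp add: power2_eq_square field_simps)
  finally show ?thesis .
qed

lemma pdy_near_centre:
  assumes z: "norm (z - a) \<le> R / 4" and w: "norm (w - b) \<le> R / 4"
  shows "norm (pdy F (z, w) - pdy F (a, w)) \<le> 8 * K / R\<^sup>2 * norm (z - a)"
proof -
  define f where "f s = F (z, s) - F (a, s)" for s
  have za: "z \<in> cball a (R / 2)" "a \<in> cball a (R / 2)" "z \<in> cball a R" "a \<in> cball a R"
    using z R_pos by (auto simp: dist_norm norm_minus_commute)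
  have near: "s \<in> cball b (R / 2)" if "s \<in> cball w (R / 4)" for s
    using that w norm_triangle_ineq[of "s - w" "w - b"]
    by (auto simp: dist_norm norm_minus_commute algebra_simps)
  have "w \<in> cball b R" using w R_pos by (auto simp: dist_norm norm_minus_commute)
  then have "deriv f w = deriv (\<lambda>s. F (z, s)) w - deriv (\<lambda>s. F (a, s)) w"
    unfolding f_def
    by (intro deriv_diff field_differentiable_partials(2)[OF za(3)] field_differentiable_partials(2)[OF za(4)])
  then have "pdy F (z, w) - pdy F (a, w) = deriv f w" by (simp add: pdy_def)
  also have "norm \<dots> \<le> 2 * K / R * norm (z - a) / (R / 4)"
  proof (rule Cauchy_deriv_bound)
    fix s assume s: "s \<in> cball w (R / 4)"
    show "f field_differentiable at s"
      unfolding f_def using field_differentiable_partials(2) za near[OF s] R_pos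
      by (auto intro!: field_differentiable_diff)
    show "norm (f s) \<le> 2 * K / R * norm (z - a)"
      using Lipschitz_half_polydisc[of "(z, s)" "(a, s)"] za near[OF s] by (simp add: f_def)
  qed (use R_pos in simp)
  also have "\<dots> = 8 * K / R\<^sup>2 * norm (z - a)"
    using R_pos by (simp add: power2_eq_square field_simps)
  finally show ?thesis .
qed

lemma renormalize_estimate:
  assumes c: "pdx F (a, b) \<noteq> 0"
    and z: "norm (z - a) \<le> d" and w: "norm (w - b) \<le> d" and d: "d \<le> R / 4"
  shows "\<exists>D. (renormalize F a (pdx F (a, b)) has_derivative D) (at (z, w)) \<and>
           norm (renormalize F a (pdx F (a, b)) (z, w) - z) + onorm (\<lambda>v. D v - fst v)
             \<le> 8 * K / R\<^sup>2 * (2 * d\<^sup>2 + 3 * d) / norm (pdx F (a, b))"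
proof -
  define L where "L = 8 * K / R\<^sup>2"
  have L: "0 \<le> L" using K_nonneg by (simp add: L_def)
  have segment: "norm (t - a) \<le> d" if "t \<in> closed_segment a z" for t
    using segment_bound1[OF that] z by simp
  obtain D where derivative: "(renormalize F a (pdx F (a, b)) has_derivative D) (at (z, w))"
    and estimate: "norm (renormalize F a (pdx F (a, b)) (z, w) - z) + onorm (\<lambda>v. D v - fst v)
           \<le> ((2 * L * d) * norm (z - a) + 2 * L * d + L * d) / norm (pdx F (a, b))"
  proof (rule exE[OF renormalize_C1_estimate[OF c]])
    show "has_derivative_partials_on F (closed_segment a z \<times> {w})"
      using partials segment w d R_pos unfolding has_derivative_partials_on_def
      by (force simp: dist_norm norm_minus_commute)
    show "norm (pdx F (t, w) - pdx F (a, b)) \<le> 2 * L * d" if t: "t \<in> closed_segment a z" for t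
    proof -
      have "norm (pdx F (t, w) - pdx F (a, b)) \<le> L * (norm (t - a) + norm (w - b))"
        using pdx_near_centre segment[OF t] w d unfolding L_def by force
      also have "\<dots> \<le> L * (d + d)"
        using segment[OF t] w L by (intro mult_left_mono add_mono) auto
      finally show ?thesis by simp
    qed
    have "norm (pdy F (z, w) - pdy F (a, w)) \<le> L * norm (z - a)"
      using pdy_near_centre[OF order_trans[OF z d] order_trans[OF w d]] by (simp add: L_def)
    also have "\<dots> \<le> L * d" using z L by (rule mult_left_mono)
    finally show "norm (pdy F (z, w) - pdy F (a, w)) \<le> L * d" .
  qed blast+
  have "((2 * L * d) * norm (z - a) + 2 * L * d + L * d) / norm (pdx F (a, b))
          \<le> L * (2 * d\<^sup>2 + 3 * d) / norm (pdx F (a, b))"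
  proof (rule divide_right_mono)
    have "(2 * L * d) * norm (z - a) \<le> (2 * L * d) * d"
      using z L order_trans[OF norm_ge_zero z] by (intro mult_left_mono) auto
    then show "(2 * L * d) * norm (z - a) + 2 * L * d + L * d \<le> L * (2 * d\<^sup>2 + 3 * d)"
      by (simp add: power2_eq_square algebra_simps)
  qed simp
  with derivative estimate show ?thesis unfolding L_def by (blast intro: order_trans)
qed

end

lemma bounded_sqI: "bounded sqI"
  unfolding sqI_def by (intro bounded_Times) auto

lemma renormalize_C1_close_real:
  fixes X :: "nat \<Rightarrow> real \<times> real \<Rightarrow> real"
    and B :: "nat \<Rightarrow> (real \<times> real) set"
    and x0 y0 :: "nat \<Rightarrow> real"
  assumes C2: "\<forall>j. C2_on (X j) sqI" and nonzero: "\<forall>j. \<forall>p\<in>sqI. pdx (X j) p \<noteq> 0"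
    and B_sub: "\<forall>j. B j \<subseteq> sqI" and diameter: "(\<lambda>j. diameter (B j)) \<longlonglongrightarrow> 0"
    and centre: "\<forall>j. (x0 j, y0 j) \<in> B j"
    and log_bound: "\<exists>C. \<forall>j. \<forall>p\<in>sqI. \<bar>pdx (\<lambda>q. ln \<bar>pdx (X j) q\<bar>) p\<bar> \<le> C \<and>
                                    \<bar>pdy (\<lambda>q. ln \<bar>pdx (X j) q\<bar>) p\<bar> \<le> C"
  shows "C1_close_to_fst (\<lambda>j. renormalize (X j) (x0 j) (pdx (X j) (x0 j, y0 j))) B"
proof -
  obtain C where C: "\<forall>j. \<forall>p\<in>sqI. \<bar>pdx (\<lambda>q. ln \<bar>pdx (X j) q\<bar>) p\<bar> \<le> C \<and>
                                    \<bar>pdy (\<lambda>q. ln \<bar>pdx (X j) q\<bar>) p\<bar> \<le> C"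
    using log_bound by blast
  have bounded_X: "log_derivative_bounded (X j) C" for j
    using C2 nonzero C by unfold_locales blast+
  let ?K = "C * exp (4 * C)"
  show ?thesis
  proof (rule C1_close_to_fstI)
    show "(\<lambda>j. ?K * (2 * (diameter (B j))\<^sup>2 + 3 * diameter (B j))) \<longlonglongrightarrow> 0"
      using diameter by (auto intro!: tendsto_eq_intros)
    show "\<forall>\<^sub>F j in sequentially. \<forall>p\<in>B j. \<exists>D.
            (renormalize (X j) (x0 j) (pdx (X j) (x0 j, y0 j)) has_derivative D) (at p) \<and>
            norm (renormalize (X j) (x0 j) (pdx (X j) (x0 j, y0 j)) p - fst p) + onorm (\<lambda>v. D v - fst v)
              \<le> ?K * (2 * (diameter (B j))\<^sup>2 + 3 * diameter (B j))"
    proof (intro always_eventually allI ballI)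
      fix j p assume p: "p \<in> B j"
      interpret log_derivative_bounded "X j" C by (rule bounded_X)
      obtain x y where xy: "p = (x, y)" by fastforce
      define d where "d = dist (x, y) (x0 j, y0 j)"
      have in_sqI: "(x0 j, y0 j) \<in> sqI" "(x, y) \<in> sqI" using B_sub centre p xy by auto
      have "d \<le> diameter (B j)"
        unfolding d_def using bounded_subset[OF bounded_sqI B_sub[rule_format]] p xy centre
        by (auto intro!: diameter_bounded_bound)
      then have "?K * (2 * d\<^sup>2 + 3 * d) \<le> ?K * (2 * (diameter (B j))\<^sup>2 + 3 * diameter (B j))"
        using C_nonneg by (intro mult_left_mono add_mono power_mono) (auto simp: d_def)
      with renormalize_estimate[OF in_sqI] show "\<exists>D. (renormalize (X j) (x0 j) (pdx (X j) (x0 j, y0 j)) has_derivative D) (at p) \<and>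
            norm (renormalize (X j) (x0 j) (pdx (X j) (x0 j, y0 j)) p - fst p) + onorm (\<lambda>v. D v - fst v)
              \<le> ?K * (2 * (diameter (B j))\<^sup>2 + 3 * diameter (B j))"
        unfolding xy d_def[symmetric] by (auto intro: order_trans)
    qed
  qed
qed

lemma ball_subset_interior:
  fixes x :: "'a::real_normed_vector"
  assumes "x \<in> T" and "0 < \<delta>" and "infdist x (frontier T) \<ge> \<delta>"
  shows "ball x \<delta> \<subseteq> interior T"
proof
  have x: "x \<in> interior T"
  proof (rule ccontr)
    assume "x \<notin> interior T"
    with \<open>x \<in> T\<close> have "x \<in> frontier T" using closure_subset unfolding frontier_def by blast
    then show False using infdist_zero[of x "frontier T"] assms(2,3) by simp
  qed
  fix y assume y: "y \<in> ball x \<delta>"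
  show "y \<in> interior T"
  proof (rule ccontr)
    assume "y \<notin> interior T"
    with y have "ball x \<delta> - interior T \<noteq> {}" by blast
    moreover have "ball x \<delta> \<inter> interior T \<noteq> {}" using x assms(2) centre_in_ball by blast
    ultimately have "ball x \<delta> \<inter> frontier (interior T) \<noteq> {}"
      by (intro connected_Int_frontier[OF connected_ball])
    then obtain q where "q \<in> ball x \<delta>" "q \<in> frontier T"
      using frontier_interior_subset by blast
    then show False using infdist_le[of q "frontier T" x] assms(3) by simp
  qed
qed

lemma norm_Itl: "z \<in> Itl \<rho> \<Longrightarrow> norm z \<le> 1 + \<rho>"
  using cmod_le[of z] unfolding Itl_def by auto

lemma bounded_Itl2: "bounded (Itl \<rho> \<times> Itl \<rho>)"
  using norm_Itl by (intro bounded_Times boundedI) blast+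

lemma renormalize_C1_close_complex:
  fixes \<rho> :: real
    and Z :: "nat \<Rightarrow> complex \<times> complex \<Rightarrow> complex"
    and Bc :: "nat \<Rightarrow> (complex \<times> complex) set"
    and zc wc :: "nat \<Rightarrow> complex"
  assumes "\<rho> > 0" and holo: "\<forall>j. holomorphic2_on (Z j) (interior (Itl \<rho> \<times> Itl \<rho>))"
    and image: "\<forall>j. Z j ` (Itl \<rho> \<times> Itl \<rho>) \<subseteq> Itl \<rho>"
    and pdx_bounds: "\<forall>j. \<forall>p\<in>interior (Itl \<rho> \<times> Itl \<rho>). 0 < cmod (pdx (Z j) p) \<and> cmod (pdx (Z j) p) < 1"
    and Bc_sub: "\<forall>j. Bc j \<subseteq> Itl \<rho> \<times> Itl \<rho>" and centre: "\<forall>j. (zc j, wc j) \<in> Bc j"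
    and ratio: "(\<lambda>j. diameter (Bc j) / cmod (pdx (Z j) (zc j, wc j))) \<longlonglongrightarrow> 0"
    and margin: "\<exists>\<delta>>0. \<forall>j. infdist (zc j, wc j) (frontier (Itl \<rho> \<times> Itl \<rho>)) \<ge> \<delta>"
  shows "C1_close_to_fst (\<lambda>j. renormalize (Z j) (zc j) (pdx (Z j) (zc j, wc j))) Bc"
proof -
  obtain \<delta> where \<delta>: "0 < \<delta>" "\<forall>j. infdist (zc j, wc j) (frontier (Itl \<rho> \<times> Itl \<rho>)) \<ge> \<delta>"
    using margin by blast
  define R where "R = \<delta> / 4"
  define K where "K = 1 + \<rho>"
  define s where "s j = diameter (Bc j) / cmod (pdx (Z j) (zc j, wc j))" for j
  let ?L = "8 * K / R\<^sup>2"
  have R: "0 < R" using \<delta> by (simp add: R_def)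
  have polydisc: "cball (zc j) R \<times> cball (wc j) R \<subseteq> interior (Itl \<rho> \<times> Itl \<rho>)" for j
  proof -
    have "cball (zc j) R \<times> cball (wc j) R \<subseteq> ball (zc j, wc j) \<delta>"
    proof clarify
      fix z w assume "z \<in> cball (zc j) R" "w \<in> cball (wc j) R"
      then have "norm (zc j - z) + norm (wc j - w) < \<delta>" using \<delta> by (simp add: R_def dist_norm)
      then show "(z, w) \<in> ball (zc j, wc j) \<delta>"
        using norm_Pair_le[of "zc j - z" "wc j - w"] by (simp add: dist_norm)
    qed
    also have "\<dots> \<subseteq> interior (Itl \<rho> \<times> Itl \<rho>)"
      using centre Bc_sub \<delta> by (intro ball_subset_interior) auto
    finally show ?thesis .
  qed
  have c: "0 < cmod (pdx (Z j) (zc j, wc j))" "cmod (pdx (Z j) (zc j, wc j)) < 1" for j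
  proof -
    have "(zc j, wc j) \<in> interior (Itl \<rho> \<times> Itl \<rho>)" using polydisc[of j] R by auto
    then show "0 < cmod (pdx (Z j) (zc j, wc j))" "cmod (pdx (Z j) (zc j, wc j)) < 1"
      using pdx_bounds by blast+
  qed
  have bounded_Z: "bounded_polydisc (Z j) (zc j) (wc j) R K" for j
  proof
    show "has_derivative_partials_on (Z j) (cball (zc j) R \<times> cball (wc j) R)"
      using holomorphic2_on_partials[OF holo[rule_format]] polydisc
      unfolding has_derivative_partials_on_def by blast
    show "norm (Z j (z, w)) \<le> K" if "z \<in> cball (zc j) R" "w \<in> cball (wc j) R" for z w
      using that polydisc[of j] interior_subset image unfolding K_def by (blast intro: norm_Itl)
  qed (rule R)
  show ?thesis
  proof (rule C1_close_to_fstI)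
    have "s \<longlonglongrightarrow> 0" using ratio unfolding s_def .
    then show "(\<lambda>j. ?L * (2 * (s j)\<^sup>2 + 3 * s j)) \<longlonglongrightarrow> 0"
      using R by (auto intro!: tendsto_eq_intros)
    have "\<forall>\<^sub>F j in sequentially. s j < R / 4"
      using ratio R unfolding s_def by (intro order_tendstoD(2)) auto
    then show "\<forall>\<^sub>F j in sequentially. \<forall>p\<in>Bc j. \<exists>D.
            (renormalize (Z j) (zc j) (pdx (Z j) (zc j, wc j)) has_derivative D) (at p) \<and>
            norm (renormalize (Z j) (zc j) (pdx (Z j) (zc j, wc j)) p - fst p) + onorm (\<lambda>v. D v - fst v)
              \<le> ?L * (2 * (s j)\<^sup>2 + 3 * s j)"
    proof eventually_elim
      case (elim j)
      show ?case
      proof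
        fix p assume p: "p \<in> Bc j"
        interpret bounded_polydisc "Z j" "zc j" "wc j" R K by (rule bounded_Z)
        obtain z w where zw: "p = (z, w)" by fastforce
        define c where "c = pdx (Z j) (zc j, wc j)"
        define d where "d = diameter (Bc j)"
        have d_eq: "d = s j * norm c" using c[of j] by (simp add: s_def d_def c_def)
        have "0 \<le> s j"
          using diameter_ge_0[OF bounded_subset[OF bounded_Itl2 Bc_sub[rule_format]]] c[of j]
          by (simp add: s_def)
        then have d_le: "d \<le> s j" using c[of j] by (simp add: d_eq c_def mult_left_le)
        have "dist (z, w) (zc j, wc j) \<le> d"
          unfolding d_def using bounded_subset[OF bounded_Itl2 Bc_sub[rule_format]] p zw centre
          by (auto intro!: diameter_bounded_bound)
        then have "norm (z - zc j) \<le> d" "norm (w - wc j) \<le> d"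
          using dist_fst_le[of "(z, w)" "(zc j, wc j)"] dist_snd_le[of "(z, w)" "(zc j, wc j)"]
          by (simp_all add: dist_norm)
        from renormalize_estimate[folded c_def, OF _ this] c[of j] d_le elim
        obtain D where D: "(renormalize (Z j) (zc j) c has_derivative D) (at (z, w))"
          and le: "norm (renormalize (Z j) (zc j) c (z, w) - z) + onorm (\<lambda>v. D v - fst v)
                     \<le> ?L * (2 * d\<^sup>2 + 3 * d) / norm c"
          unfolding c_def by fastforce
        have "?L * (2 * d\<^sup>2 + 3 * d) / norm c = ?L * (2 * d * s j + 3 * s j)"
          using c[of j] R by (simp add: d_eq c_def power2_eq_square field_simps)
        also have "\<dots> \<le> ?L * (2 * (s j)\<^sup>2 + 3 * s j)"
          using d_le \<open>0 \<le> s j\<close> K_nonneg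
          by (intro mult_left_mono add_mono) (auto simp: power2_eq_square mult_right_mono)
        finally show "\<exists>D. (renormalize (Z j) (zc j) (pdx (Z j) (zc j, wc j)) has_derivative D) (at p) \<and>
            norm (renormalize (Z j) (zc j) (pdx (Z j) (zc j, wc j)) p - fst p) + onorm (\<lambda>v. D v - fst v)
              \<le> ?L * (2 * (s j)\<^sup>2 + 3 * s j)"
          using D le zw unfolding c_def by (auto intro: order_trans)
      qed
    qed
  qed
qed

theorem propositionB3:
  fixes X :: "nat \<Rightarrow> real \<times> real \<Rightarrow> real"
    and B :: "nat \<Rightarrow> (real \<times> real) set"
    and x0 y0 :: "nat \<Rightarrow> real"
    and \<rho> :: real
    and Z :: "nat \<Rightarrow> complex \<times> complex \<Rightarrow> complex"
    and Bc :: "nat \<Rightarrow> (complex \<times> complex) set"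
    and zc wc :: "nat \<Rightarrow> complex"
  shows
   "((\<forall>j. C2_on (X j) sqI) \<and>
     (\<forall>j. \<forall>p\<in>sqI. pdx (X j) p \<noteq> 0) \<and>
     (\<forall>j. B j \<subseteq> sqI) \<and>
     (\<lambda>j. diameter (B j)) \<longlonglongrightarrow> 0 \<and>
     (\<forall>j. (x0 j, y0 j) \<in> B j) \<and>
     (\<exists>C. \<forall>j. \<forall>p\<in>sqI. \<bar>pdx (\<lambda>q. ln \<bar>pdx (X j) q\<bar>) p\<bar> \<le> C \<and>
                        \<bar>pdy (\<lambda>q. ln \<bar>pdx (X j) q\<bar>) p\<bar> \<le> C)
     \<longrightarrow> C1_close_to_fst
           (\<lambda>j (x, y). (X j (x, y) - X j (x0 j, y)) / pdx (X j) (x0 j, y0 j) + x0 j) B)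
    \<and>
    (\<rho> > 0 \<and>
     (\<forall>j. holomorphic2_on (Z j) (interior (Itl \<rho> \<times> Itl \<rho>))) \<and>
     (\<forall>j. Z j ` (Itl \<rho> \<times> Itl \<rho>) \<subseteq> Itl \<rho>) \<and>
     (\<forall>j. \<forall>p\<in>interior (Itl \<rho> \<times> Itl \<rho>). 0 < cmod (pdx (Z j) p) \<and> cmod (pdx (Z j) p) < 1) \<and>
     (\<forall>j. Bc j \<subseteq> Itl \<rho> \<times> Itl \<rho>) \<and>
     (\<forall>j. (zc j, wc j) \<in> Bc j) \<and>
     (\<lambda>j. diameter (Bc j) / cmod (pdx (Z j) (zc j, wc j))) \<longlonglongrightarrow> 0 \<and>
     (\<exists>\<delta>>0. \<forall>j. infdist (zc j, wc j) (frontier (Itl \<rho> \<times> Itl \<rho>)) \<ge> \<delta>)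
     \<longrightarrow> C1_close_to_fst
           (\<lambda>j (z, w). (Z j (z, w) - Z j (zc j, w)) / pdx (Z j) (zc j, wc j) + zc j) Bc)"
  using renormalize_C1_close_real[of X B x0 y0] renormalize_C1_close_complex[of \<rho> Z Bc zc wc]
  unfolding renormalize_def by blast

end
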